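(* Let $(f,\preceq)$ be a flow for a geometry $(G,I,O)$. Then there is a path cover $\mathcal P_f$ of $(G,I,O)$ such that for all vertices $v,w \in V(G)$, $v \to w$ is an arc of some path of $\mathcal P_f$ if and only if $v \in O^c$ and $w = f(v)$.
   Context: All graphs are finite, simple and undirected, with no self-loops; $v \sim w$ denotes adjacency. A geometry is a triple $(G,I,O)$ with $G$ a graph and $I,O\subseteq V(G)$; $O^c = V(G)\setminus O$, $I^c = V(G)\setminus I$. A flow for $(G,I,O)$ is a pair $(f,\preceq)$ with $f:O^c\to I^c$ a function and $\preceq$ a partial order on $V(G)$ such that for all $v\in O^c$, $w\in V(G)$: $v\sim f(v)$; $v\preceq f(v)$; and $w\sim f(v)\Rightarrow v\preceq w$. A directed path in $G$ is a sequence of distinct vertices $u_0,\dots,u_\ell$ ($\ell\ge 0$; $\ell=0$ is a trivial path) with $u_{i}\sim u_{i+1}$, whose arcs are $u_i\to u_{i+1}$. A path cover of $(G,I,O)$ is a collection $\mathcal C$ of directed paths in $G$ such that (i) every vertex of $G$ lies on exactly one path of $\mathcal C$; (ii) each path of $\mathcal C$ is either disjoint from $I$ or meets $I$ only at its initial vertex; (iii) each path of $\mathcal C$ meets $O$ only at its final vertex (in particular, its final vertex lies in $O$). *)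

theory Defs
  imports Main
begin

definition simple_graph :: "'a set \<Rightarrow> ('a \<Rightarrow> 'a \<Rightarrow> bool) \<Rightarrow> bool" where
  "simple_graph V E \<longleftrightarrow> finite V
     \<and> (\<forall>u v. E u v \<longrightarrow> u \<in> V \<and> v \<in> V)
     \<and> (\<forall>u v. E u v \<longrightarrow> E v u)
     \<and> (\<forall>u. \<not> E u u)"

definition geometry :: "'a set \<Rightarrow> ('a \<Rightarrow> 'a \<Rightarrow> bool) \<Rightarrow> 'a set \<Rightarrow> 'a set \<Rightarrow> bool" where
  "geometry V E In Out \<longleftrightarrow> simple_graph V E \<and> In \<subseteq> V \<and> Out \<subseteq> V"

definition is_flow :: "'a set \<Rightarrow> ('a \<Rightarrow> 'a \<Rightarrow> bool) \<Rightarrow> 'a set \<Rightarrow> 'a set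
    \<Rightarrow> ('a \<Rightarrow> 'a) \<Rightarrow> ('a \<times> 'a) set \<Rightarrow> bool" where
  "is_flow V E In Out f le \<longleftrightarrow>
     (\<forall>v \<in> V - Out. f v \<in> V - In)
     \<and> partial_order_on V le
     \<and> (\<forall>v \<in> V - Out. E v (f v))
     \<and> (\<forall>v \<in> V - Out. (v, f v) \<in> le)
     \<and> (\<forall>v \<in> V - Out. \<forall>w \<in> V. E w (f v) \<longrightarrow> (v, w) \<in> le)"

definition directed_path :: "'a set \<Rightarrow> ('a \<Rightarrow> 'a \<Rightarrow> bool) \<Rightarrow> 'a list \<Rightarrow> bool" where
  "directed_path V E p \<longleftrightarrow> p \<noteq> [] \<and> distinct p \<and> set p \<subseteq> V
     \<and> (\<forall>i. Suc i < length p \<longrightarrow> E (p ! i) (p ! Suc i))"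

definition is_arc :: "'a list \<Rightarrow> 'a \<Rightarrow> 'a \<Rightarrow> bool" where
  "is_arc p v w \<longleftrightarrow> (\<exists>i. Suc i < length p \<and> p ! i = v \<and> p ! Suc i = w)"

definition path_cover :: "'a set \<Rightarrow> ('a \<Rightarrow> 'a \<Rightarrow> bool) \<Rightarrow> 'a set \<Rightarrow> 'a set
    \<Rightarrow> 'a list set \<Rightarrow> bool" where
  "path_cover V E In Out C \<longleftrightarrow>
     (\<forall>p \<in> C. directed_path V E p)
     \<and> (\<forall>v \<in> V. \<exists>!p. p \<in> C \<and> v \<in> set p)
     \<and> (\<forall>p \<in> C. set p \<inter> In = {} \<or> set p \<inter> In = {hd p})
     \<and> (\<forall>p \<in> C. set p \<inter> Out = {last p})"

end

theory Submission
  imports Defs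
begin

(* Follow the flow function: starting from a vertex x, the orbit
   x, f x, f (f x), ... is strictly increasing for the flow order as long as it
   stays in O^c (since v \<prec> f v, f v being a neighbour of v and E irreflexive),
   so by finiteness it reaches O after finitely many steps.  The flow condition
   "w ~ f v implies v \<preceq> w" makes f injective on O^c.  The paths of the cover
   are the orbits cut at their first vertex in O, started at the vertices that
   are not f-images ("start vertices").  Every vertex is reached from a start
   vertex by walking f backwards (induction on the size of its down-set), and
   the start vertex is unique by injectivity of f.  Inputs can only occur at the
   start of such a path since f maps O^c into I^c, outputs only at the end. *)

text \<open>The hypotheses actually used: a finite vertex set, an irreflexive adjacency
  relation, and a flow.\<close>
locale flow_on =
  fixes V :: "'a set" and E :: "'a \<Rightarrow> 'a \<Rightarrow> bool" and In Out :: "'a set"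
    and f :: "'a \<Rightarrow> 'a" and le :: "('a \<times> 'a) set"
  assumes finite_V: "finite V"
    and irrefl_E: "\<And>u. \<not> E u u"
    and flow: "is_flow V E In Out f le"
begin

lemma f_maps: "v \<in> V - Out \<Longrightarrow> f v \<in> V - In"
  and f_adj: "v \<in> V - Out \<Longrightarrow> E v (f v)"
  and f_le: "v \<in> V - Out \<Longrightarrow> (v, f v) \<in> le"
  and f_nbr: "v \<in> V - Out \<Longrightarrow> w \<in> V \<Longrightarrow> E w (f v) \<Longrightarrow> (v, w) \<in> le"
  using flow unfolding is_flow_def by blast+

lemma le_refl: "x \<in> V \<Longrightarrow> (x, x) \<in> le"
  and le_trans: "(x, y) \<in> le \<Longrightarrow> (y, z) \<in> le \<Longrightarrow> (x, z) \<in> le"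
  and le_antisym: "(x, y) \<in> le \<Longrightarrow> (y, x) \<in> le \<Longrightarrow> x = y"
  using flow
  unfolding is_flow_def partial_order_on_def preorder_on_def refl_on_def trans_def antisym_def
  by blast+

lemma f_moves: "v \<in> V - Out \<Longrightarrow> f v \<noteq> v"
  using f_adj irrefl_E by metis

text \<open>f is injective on O^c: if f u = f v then u \<preceq> v and v \<preceq> u, both being
  neighbours of the common image.\<close>
lemma f_inj: "u \<in> V - Out \<Longrightarrow> v \<in> V - Out \<Longrightarrow> f u = f v \<Longrightarrow> u = v"
  using f_nbr f_adj le_antisym by (metis DiffD1)

subsection \<open>Orbits of the flow function\<close>

definition runs :: "'a \<Rightarrow> nat \<Rightarrow> bool" where
  "runs x k \<longleftrightarrow> (\<forall>m<k. (f ^^ m) x \<in> V - Out)"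

lemma runs_Suc: "runs x (Suc k) \<longleftrightarrow> runs x k \<and> (f ^^ k) x \<in> V - Out"
  unfolding runs_def using less_Suc_eq by auto

lemma runs_mono: "runs x k \<Longrightarrow> j \<le> k \<Longrightarrow> runs x j"
  unfolding runs_def by auto

lemma runs_in_V: "x \<in> V \<Longrightarrow> runs x k \<Longrightarrow> (f ^^ k) x \<in> V"
  using f_maps by (cases k) (auto simp: runs_Suc)

lemma runs_le:
  assumes "x \<in> V" and "runs x k" and "i \<le> k"
  shows "((f ^^ i) x, (f ^^ k) x) \<in> le"
  using assms(2,3)
proof (induction k)
  case 0
  then show ?case using le_refl \<open>x \<in> V\<close> by simp
next
  case (Suc k)
  then have step: "(f ^^ k) x \<in> V - Out" and run: "runs x k" by (simp_all add: runs_Suc)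
  show ?case
  proof (cases "i = Suc k")
    case True
    then show ?thesis using le_refl runs_in_V[OF \<open>x \<in> V\<close> Suc.prems(1)] by simp
  next
    case False
    then have "((f ^^ i) x, (f ^^ k) x) \<in> le" using Suc.IH run Suc.prems(2) by simp
    then show ?thesis using f_le[OF step] le_trans by simp
  qed
qed

text \<open>Along a run the orbit never repeats a vertex: a repetition would force
  f to fix a vertex by antisymmetry.\<close>
lemma runs_distinct:
  assumes "x \<in> V" and "runs x k" and "i < k"
  shows "(f ^^ i) x \<noteq> (f ^^ k) x"
proof
  assume eq: "(f ^^ i) x = (f ^^ k) x"
  have step: "(f ^^ i) x \<in> V - Out" using assms(2,3) by (simp add: runs_def)
  have "((f ^^ Suc i) x, (f ^^ k) x) \<in> le" using runs_le[OF assms(1,2), of "Suc i"] assms(3) by simp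
  then have "f ((f ^^ i) x) = (f ^^ i) x" using f_le[OF step] eq le_antisym by simp
  then show False using f_moves[OF step] by contradiction
qed

lemma runs_inj_on:
  assumes "x \<in> V" and "runs x k"
  shows "inj_on (\<lambda>i. (f ^^ i) x) {..k}"
proof (rule inj_onI)
  fix i j assume "i \<in> {..k}" "j \<in> {..k}" "(f ^^ i) x = (f ^^ j) x"
  then show "i = j"
    using runs_distinct[OF assms(1) runs_mono[OF assms(2)]]
    by (metis atMost_iff linorder_neqE_nat)
qed

text \<open>By finiteness, no orbit runs forever: it eventually hits O.\<close>
lemma orbit_reaches_Out:
  assumes "x \<in> V"
  shows "\<exists>k. (f ^^ k) x \<in> Out"
proof (rule ccontr)
  assume "\<nexists>k. (f ^^ k) x \<in> Out"
  then have all_runs: "runs x k" for k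
    using runs_in_V[OF assms] by (induction k) (auto simp: runs_Suc runs_def[of x 0])
  have "inj (\<lambda>k. (f ^^ k) x)"
    by (rule injI) (metis runs_distinct[OF assms all_runs] linorder_neqE_nat)
  moreover have "range (\<lambda>k. (f ^^ k) x) \<subseteq> V"
    using runs_in_V[OF assms all_runs] by blast
  ultimately show False
    using finite_V by (meson finite_imageD finite_subset infinite_UNIV_nat)
qed

definition exit_time :: "'a \<Rightarrow> nat" where
  "exit_time x = (LEAST k. (f ^^ k) x \<in> Out)"

lemma exit_time_Out: "x \<in> V \<Longrightarrow> (f ^^ exit_time x) x \<in> Out"
  unfolding exit_time_def using orbit_reaches_Out by (metis LeastI)

lemma runs_exit_time:
  assumes "x \<in> V" shows "runs x (exit_time x)"
proof -
  have "runs x k" if "k \<le> exit_time x" for k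
    using that
  proof (induction k)
    case (Suc k)
    have "k < exit_time x" using Suc.prems by simp
    then have "(f ^^ k) x \<notin> Out" unfolding exit_time_def by (rule not_less_Least)
    then show ?case using Suc runs_in_V[OF assms] by (simp add: runs_Suc)
  qed (simp add: runs_def)
  then show ?thesis by simp
qed

lemma runs_le_exit_time: "x \<in> V \<Longrightarrow> runs x k \<Longrightarrow> k \<le> exit_time x"
  using exit_time_Out unfolding runs_def by (meson Diff_iff not_le)

subsection \<open>Start vertices\<close>

definition starts :: "'a set" where
  "starts = V - f ` (V - Out)"

lemma starts_in_V: "s \<in> starts \<Longrightarrow> s \<in> V"
  unfolding starts_def by simp

text \<open>Every vertex lies on the run of some start vertex: walk f backwards.  This
  terminates because the predecessor of v has a strictly smaller down-set.\<close>
lemma reached_from_start: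
  assumes "v \<in> V"
  shows "\<exists>s\<in>starts. \<exists>k. runs s k \<and> (f ^^ k) s = v"
  using assms
proof (induction "card {w\<in>V. (w, v) \<in> le}" arbitrary: v rule: less_induct)
  case less
  show ?case
  proof (cases "v \<in> starts")
    case True
    then show ?thesis by (intro bexI[of _ v] exI[of _ 0]) (simp_all add: runs_def)
  next
    case False
    then obtain u where u: "u \<in> V - Out" and v: "v = f u"
      using less.prems unfolding starts_def by auto
    have down_sets: "{w\<in>V. (w, u) \<in> le} \<subset> {w\<in>V. (w, v) \<in> le}"
    proof
      show "{w\<in>V. (w, u) \<in> le} \<subseteq> {w\<in>V. (w, v) \<in> le}"
        using le_trans[OF _ f_le[OF u]] v by blast
      have "(v, u) \<notin> le" using le_antisym[OF f_le[OF u]] f_moves[OF u] v by metis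
      then show "{w\<in>V. (w, u) \<in> le} \<noteq> {w\<in>V. (w, v) \<in> le}"
        using less.prems le_refl by blast
    qed
    have "card {w\<in>V. (w, u) \<in> le} < card {w\<in>V. (w, v) \<in> le}"
      using psubset_card_mono[OF _ down_sets] finite_V by simp
    then obtain s k where "s \<in> starts" "runs s k" "(f ^^ k) s = u"
      using less.hyps u by blast
    then show ?thesis
      using u v by (intro bexI[of _ s] exI[of _ "Suc k"]) (simp_all add: runs_Suc)
  qed
qed

text \<open>Cancelling f along two runs, by injectivity of f on O^c.\<close>
lemma runs_cancel:
  assumes "(f ^^ k) s = (f ^^ k') s'" and "runs s k" and "runs s' k'" and "k \<le> k'"
  shows "s = (f ^^ (k' - k)) s'"
  using assms
proof (induction k arbitrary: k')
  case (Suc k)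
  then obtain j where j: "k' = Suc j" by (cases k') auto
  have "(f ^^ k) s = (f ^^ j) s'"
    using f_inj Suc.prems j by (simp add: runs_Suc)
  then show ?case using Suc j by (simp add: runs_Suc)
qed simp

lemma start_unique:
  assumes "s \<in> starts" "s' \<in> starts" "runs s k" "runs s' k'" "(f ^^ k) s = (f ^^ k') s'"
  shows "s = s'"
proof -
  have one_sided: "t = t'"
    if "t \<in> starts" "runs t' j'" "(f ^^ j) t = (f ^^ j') t'" "runs t j" "j \<le> j'" for t t' j j'
  proof (cases "j' - j")
    case (Suc i)
    have "t = f ((f ^^ i) t')" using runs_cancel[OF that(3,4,2,5)] Suc by simp
    moreover have "(f ^^ i) t' \<in> V - Out"
      using that(2) Suc unfolding runs_def by simp
    ultimately show ?thesis using that(1) unfolding starts_def by blast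
  next
    case 0
    then show ?thesis using runs_cancel[OF that(3,4,2,5)] by simp
  qed
  show ?thesis
    using one_sided[of s s' k' k] one_sided[of s' s k k'] assms by (metis nat_le_linear)
qed

subsection \<open>Orbit paths\<close>

definition orbit_path :: "'a \<Rightarrow> 'a list" where
  "orbit_path x = map (\<lambda>i. (f ^^ i) x) [0..<Suc (exit_time x)]"

lemma length_orbit_path: "length (orbit_path x) = Suc (exit_time x)"
  by (simp add: orbit_path_def)

lemma nth_orbit_path: "i \<le> exit_time x \<Longrightarrow> orbit_path x ! i = (f ^^ i) x"
  unfolding orbit_path_def by (simp del: upt_Suc add: nth_map_upt less_Suc_eq_le)

lemma set_orbit_path: "set (orbit_path x) = (\<lambda>i. (f ^^ i) x) ` {..exit_time x}"
  unfolding orbit_path_def by (simp del: upt_Suc add: atLeast0LessThan lessThan_Suc_atMost)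

lemma hd_orbit_path: "hd (orbit_path x) = x"
  unfolding orbit_path_def by (simp del: upt_Suc add: upt_conv_Cons)

lemma last_orbit_path: "last (orbit_path x) = (f ^^ exit_time x) x"
  by (simp add: orbit_path_def)

lemma directed_path_orbit_path:
  assumes "x \<in> V"
  shows "directed_path V E (orbit_path x)"
proof -
  note run = runs_exit_time[OF assms]
  have "distinct (orbit_path x)"
    using runs_inj_on[OF assms run]
    by (simp del: upt_Suc add: orbit_path_def distinct_map atLeast0LessThan lessThan_Suc_atMost)
  moreover have "set (orbit_path x) \<subseteq> V"
    using runs_in_V[OF assms runs_mono[OF run]] by (auto simp: set_orbit_path)
  moreover have "E (orbit_path x ! i) (orbit_path x ! Suc i)"
    if "Suc i < length (orbit_path x)" for i
  proof -
    have "i < exit_time x" using that by (simp add: length_orbit_path)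
    then have "(f ^^ i) x \<in> V - Out" using run unfolding runs_def by simp
    then show ?thesis
      using f_adj \<open>i < exit_time x\<close> by (simp add: nth_orbit_path)
  qed
  ultimately show ?thesis
    unfolding directed_path_def by (simp add: orbit_path_def)
qed

text \<open>Only the first vertex of an orbit path can be an input: all later ones are
  f-images, which lie in I^c.\<close>
lemma orbit_path_In:
  assumes "x \<in> V"
  shows "set (orbit_path x) \<inter> In = {} \<or> set (orbit_path x) \<inter> In = {hd (orbit_path x)}"
proof -
  have "(f ^^ k) x \<notin> In" if "0 < k" "k \<le> exit_time x" for k
  proof -
    obtain j where j: "k = Suc j" using \<open>0 < k\<close> gr0_implies_Suc by blast
    then have "(f ^^ j) x \<in> V - Out"
      using runs_exit_time[OF assms] that(2) unfolding runs_def by simp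
    then show ?thesis using f_maps j by simp
  qed
  then have "set (orbit_path x) \<inter> In \<subseteq> {hd (orbit_path x)}"
    by (auto simp: set_orbit_path hd_orbit_path) (metis funpow_0 gr0I)
  then show ?thesis by blast
qed

lemma orbit_path_Out:
  assumes "x \<in> V"
  shows "set (orbit_path x) \<inter> Out = {last (orbit_path x)}"
proof -
  have "(f ^^ k) x \<notin> Out" if "k < exit_time x" for k
    using runs_exit_time[OF assms] that unfolding runs_def by simp
  then show ?thesis
    using exit_time_Out[OF assms]
    by (auto simp: set_orbit_path last_orbit_path order.order_iff_strict)
qed

lemma on_orbit_path_of_start:
  assumes "v \<in> V"
  obtains s k where "s \<in> starts" "k \<le> exit_time s" "(f ^^ k) s = v"
  using reached_from_start[OF assms] runs_le_exit_time starts_in_V by blast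

lemma orbit_paths_cover: "path_cover V E In Out (orbit_path ` starts)"
proof -
  have paths: "directed_path V E p \<and> (set p \<inter> In = {} \<or> set p \<inter> In = {hd p})
      \<and> set p \<inter> Out = {last p}" if p: "p \<in> orbit_path ` starts" for p
  proof -
    obtain s where "s \<in> starts" "p = orbit_path s" using p by blast
    then show ?thesis
      using directed_path_orbit_path orbit_path_In orbit_path_Out starts_in_V by simp
  qed
  have unique: "\<exists>!p. p \<in> orbit_path ` starts \<and> v \<in> set p" if "v \<in> V" for v
  proof -
    obtain s k where s: "s \<in> starts" "k \<le> exit_time s" "(f ^^ k) s = v"
      using \<open>v \<in> V\<close> by (rule on_orbit_path_of_start)
    have "s' = s" if s': "s' \<in> starts" and on: "v \<in> set (orbit_path s')" for s'
    proof -
      obtain k' where k': "k' \<le> exit_time s'" "(f ^^ k') s' = v"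
        using on by (auto simp: set_orbit_path)
      have "runs s' k'" "runs s k"
        using runs_mono[OF runs_exit_time] starts_in_V s' s k' by blast+
      then show ?thesis
        using start_unique[OF s' s(1)] s(3) k'(2) by simp
    qed
    moreover have "v \<in> set (orbit_path s)" using s by (auto simp: set_orbit_path)
    ultimately show ?thesis using s(1) by blast
  qed
  show ?thesis
    unfolding path_cover_def using paths unique by simp
qed

lemma orbit_paths_arcs:
  assumes "v \<in> V"
  shows "(\<exists>p \<in> orbit_path ` starts. is_arc p v w) \<longleftrightarrow> v \<in> V - Out \<and> w = f v"
proof
  assume "\<exists>p \<in> orbit_path ` starts. is_arc p v w"
  then obtain s i where s: "s \<in> starts" and i: "Suc i < length (orbit_path s)"
    and vw: "orbit_path s ! i = v" "orbit_path s ! Suc i = w"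
    unfolding is_arc_def by blast
  have i_exit: "i < exit_time s" using i by (simp add: length_orbit_path)
  then have "(f ^^ i) s \<in> V - Out"
    using runs_exit_time[OF starts_in_V[OF s]] unfolding runs_def by blast
  moreover have "v = (f ^^ i) s" "w = f ((f ^^ i) s)"
    using vw i_exit by (simp_all add: nth_orbit_path)
  ultimately show "v \<in> V - Out \<and> w = f v" by simp
next
  assume vw: "v \<in> V - Out \<and> w = f v"
  obtain s k where s: "s \<in> starts" "k \<le> exit_time s" "(f ^^ k) s = v"
    using assms by (rule on_orbit_path_of_start)
  have "k \<noteq> exit_time s" using exit_time_Out[OF starts_in_V] s vw by auto
  then have "is_arc (orbit_path s) v w"
    unfolding is_arc_def using s vw
    by (intro exI[of _ k]) (simp add: length_orbit_path nth_orbit_path)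
  then show "\<exists>p \<in> orbit_path ` starts. is_arc p v w" using s(1) by blast
qed

end

theorem mainTheorem2:
  fixes V :: "'a set" and E :: "'a \<Rightarrow> 'a \<Rightarrow> bool" and In Out :: "'a set"
    and f :: "'a \<Rightarrow> 'a" and le :: "('a \<times> 'a) set"
  assumes "geometry V E In Out"
    and "is_flow V E In Out f le"
  shows "\<exists>C. path_cover V E In Out C \<and>
           (\<forall>v \<in> V. \<forall>w \<in> V. (\<exists>p \<in> C. is_arc p v w) \<longleftrightarrow> (v \<in> V - Out \<and> w = f v))"
proof -
  interpret flow_on V E In Out f le
    using assms by unfold_locales (simp_all add: geometry_def simple_graph_def)
  show ?thesis
    using orbit_paths_cover orbit_paths_arcs by (intro exI[of _ "orbit_path ` starts"]) simp
qed

end
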